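(* Let $1\le u\le n$, let $p\ge1$, and let $X\subset\mathbb{Z}^n$ be $c_u$-connected. Let $A,B\subset X$ be finite, nonempty, $c_u$-connected sets. Suppose $H_{(X,c_u)}(A,B)\le m$ for some $m\in\mathbb{N}$. Then $H_p(A,B)\le m\,u^{1/p}$.
   Context: Two distinct points $x=(x_1,\dots,x_n),y=(y_1,\dots,y_n)\in\mathbb{Z}^n$ are $c_u$-adjacent if there are at most $u$ indices $i$ with $|x_i-y_i|=1$ and for all other indices $j$, $x_j=y_j$. A set is $c_u$-connected if any two of its points are joined by a finite sequence of points in the set with consecutive points $c_u$-adjacent. A $c_u$-path in $X$ of length $k$ from $a$ to $b$ is a sequence $a=y_0,\dots,y_k=b$ in $X$ with $y_i,y_{i+1}$ $c_u$-adjacent. $H_{(X,c_u)}(A,B)$ is the least $\varepsilon\ge0$ such that for every $a\in A$ there is $b'\in B$ and a $c_u$-path in $X$ of length $\le\varepsilon$ from $a$ to $b'$, and for every $b\in B$ there is $a'\in A$ and a $c_u$-path in $X$ of length $\le\varepsilon$ from $b$ to $a'$. $d_p(x,y)=\left(\sum_i|x_i-y_i|^p\right)^{1/p}$ and $H_p(A,B)=\min\{\varepsilon\ge0:\forall a\in A\ \exists b\in B,\ d_p(a,b)\le\varepsilon,\ \text{and}\ \forall b\in B\ \exists a\in A,\ d_p(a,b)\le\varepsilon\}$. *)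

theory Defs
  imports "HOL-Analysis.Analysis"
begin

text \<open>Points of Z^n are vectors int ^ 'n, with n = CARD('n).\<close>

definition c_adj :: "nat \<Rightarrow> int ^ 'n \<Rightarrow> int ^ 'n \<Rightarrow> bool" where
  "c_adj u x y \<longleftrightarrow> x \<noteq> y \<and> (\<forall>i. \<bar>x $ i - y $ i\<bar> \<le> 1)
     \<and> card {i. \<bar>x $ i - y $ i\<bar> = 1} \<le> u"

definition c_path :: "(int ^ 'n) set \<Rightarrow> nat \<Rightarrow> nat \<Rightarrow> int ^ 'n \<Rightarrow> int ^ 'n \<Rightarrow> bool" where
  "c_path X u k a b \<longleftrightarrow> (\<exists>y :: nat \<Rightarrow> int ^ 'n. y 0 = a \<and> y k = b
      \<and> (\<forall>i\<le>k. y i \<in> X) \<and> (\<forall>i<k. c_adj u (y i) (y (Suc i))))"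

definition c_connected :: "nat \<Rightarrow> (int ^ 'n) set \<Rightarrow> bool" where
  "c_connected u S \<longleftrightarrow> (\<forall>a\<in>S. \<forall>b\<in>S. \<exists>k. c_path S u k a b)"

definition H_digital :: "(int ^ 'n) set \<Rightarrow> nat \<Rightarrow> (int ^ 'n) set \<Rightarrow> (int ^ 'n) set \<Rightarrow> real" where
  "H_digital X u A B = Inf {\<epsilon>::real. \<epsilon> \<ge> 0 \<and>
      (\<forall>a\<in>A. \<exists>b'\<in>B. \<exists>k. real k \<le> \<epsilon> \<and> c_path X u k a b') \<and>
      (\<forall>b\<in>B. \<exists>a'\<in>A. \<exists>k. real k \<le> \<epsilon> \<and> c_path X u k b a')}"

definition d_p :: "real \<Rightarrow> int ^ 'n \<Rightarrow> int ^ 'n \<Rightarrow> real" where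
  "d_p p x y = (\<Sum>i\<in>UNIV. real_of_int \<bar>x $ i - y $ i\<bar> powr p) powr (1 / p)"

definition H_p :: "real \<Rightarrow> (int ^ 'n) set \<Rightarrow> (int ^ 'n) set \<Rightarrow> real" where
  "H_p p A B = Inf {\<epsilon>::real. \<epsilon> \<ge> 0 \<and>
      (\<forall>a\<in>A. \<exists>b\<in>B. d_p p a b \<le> \<epsilon>) \<and> (\<forall>b\<in>B. \<exists>a\<in>A. d_p p a b \<le> \<epsilon>)}"

end

theory Submission
  imports Defs
begin

text \<open>Along a \<open>c\<^sub>u\<close>-path of length \<open>k\<close> every coordinate changes by at most \<open>k\<close> and the
  \<open>\<ell>\<^sub>1\<close>-distance grows by at most \<open>u\<close> per step. The interpolation inequality
  \<open>\<Sum> t\<^sub>i^p \<le> (max t\<^sub>i)^(p-1) \<Sum> t\<^sub>i\<close> then bounds the \<open>d\<^sub>p\<close>-distance of its endpoints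
  by \<open>(k^(p-1) k u)^(1/p) = k u^(1/p)\<close>. Since path lengths are natural numbers, a digital
  Hausdorff distance of at most \<open>m\<close> provides connecting paths of length at most \<open>m\<close>.\<close>

lemma dist_along_chain_le:
  fixes d :: "'a \<Rightarrow> 'a \<Rightarrow> 'b::ordered_semiring_1"
  assumes "\<And>x. d x x = 0" and "\<And>x y z. d x z \<le> d x y + d y z"
    and "\<forall>i<k. d (y i) (y (Suc i)) \<le> c"
  shows "d (y 0) (y k) \<le> of_nat k * c"
  using assms(3)
proof (induction k)
  case 0
  then show ?case using assms(1) by simp
next
  case (Suc k)
  have "d (y 0) (y (Suc k)) \<le> d (y 0) (y k) + d (y k) (y (Suc k))"
    by (rule assms(2))
  also have "\<dots> \<le> of_nat k * c + c"
    using Suc by (intro add_mono) auto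
  finally show ?case by (simp add: algebra_simps)
qed

lemma c_adj_abs_le_1:
  "c_adj u x y \<Longrightarrow> \<bar>x $ i - y $ i\<bar> \<le> 1"
  unfolding c_adj_def by blast

lemma c_adj_l1_le:
  assumes "c_adj u x y"
  shows "(\<Sum>i\<in>UNIV. \<bar>x $ i - y $ i\<bar>) \<le> int u"
proof -
  have "(\<Sum>i\<in>UNIV. \<bar>x $ i - y $ i\<bar>) = (\<Sum>i\<in>UNIV. of_bool (\<bar>x $ i - y $ i\<bar> = 1))"
    using c_adj_abs_le_1[OF assms] by (intro sum.cong refl) (smt (verit) of_bool_eq)
  also have "\<dots> = int (card {i. \<bar>x $ i - y $ i\<bar> = 1})"
    by simp
  finally show ?thesis
    using assms unfolding c_adj_def by simp
qed

lemma c_path_abs_le: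
  assumes "c_path X u k a b"
  shows "\<bar>a $ i - b $ i\<bar> \<le> int k"
proof -
  obtain y where "y 0 = a" "y k = b" "\<forall>j<k. c_adj u (y j) (y (Suc j))"
    using assms unfolding c_path_def by blast
  then show ?thesis
    using dist_along_chain_le[of "\<lambda>x y. \<bar>x $ i - y $ i\<bar>" k y 1] c_adj_abs_le_1
    by fastforce
qed

lemma c_path_l1_le:
  assumes "c_path X u k a b"
  shows "(\<Sum>i\<in>UNIV. \<bar>a $ i - b $ i\<bar>) \<le> int k * int u"
proof -
  obtain y where "y 0 = a" "y k = b" "\<forall>j<k. c_adj u (y j) (y (Suc j))"
    using assms unfolding c_path_def by blast
  moreover have "(\<Sum>i\<in>UNIV. \<bar>x $ i - z $ i\<bar>) \<le> (\<Sum>i\<in>UNIV. \<bar>x $ i - y $ i\<bar>) + (\<Sum>i\<in>UNIV. \<bar>y $ i - z $ i\<bar>)"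
    for x y z :: "int ^ 'n"
    by (simp add: sum.distrib[symmetric] sum_mono)
  ultimately show ?thesis
    using dist_along_chain_le[of "\<lambda>x y. \<Sum>i\<in>UNIV. \<bar>x $ i - y $ i\<bar>" k y "int u"] c_adj_l1_le
    by fastforce
qed

lemma sum_powr_le_powr_mult_sum:
  fixes t :: "'i \<Rightarrow> real"
  assumes "p \<ge> 1" and "\<And>i. i \<in> I \<Longrightarrow> 0 \<le> t i" and "\<And>i. i \<in> I \<Longrightarrow> t i \<le> k"
  shows "(\<Sum>i\<in>I. t i powr p) \<le> k powr (p - 1) * (\<Sum>i\<in>I. t i)"
proof -
  have "t i powr p \<le> k powr (p - 1) * t i" if "i \<in> I" for i
  proof -
    have "t i powr p = t i powr (p - 1) * t i powr 1"
      by (subst powr_add[symmetric]) simp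
    also have "\<dots> = t i powr (p - 1) * t i"
      using assms(2)[OF that] by simp
    also have "\<dots> \<le> k powr (p - 1) * t i"
      using assms that by (intro mult_right_mono powr_mono2) auto
    finally show ?thesis .
  qed
  then show ?thesis
    by (simp add: sum_distrib_left sum_mono)
qed

lemma d_p_commute: "d_p p x y = d_p p y x"
  unfolding d_p_def by (simp add: abs_minus_commute)

lemma d_p_c_path_le:
  assumes "c_path X u k a b" and "p \<ge> 1"
  shows "d_p p a b \<le> real k * real u powr (1 / p)"
proof -
  define t where "t i = real_of_int \<bar>a $ i - b $ i\<bar>" for i
  have "t i \<le> real k" for i
    using c_path_abs_le[OF assms(1)] unfolding t_def by (metis of_int_le_iff of_int_of_nat_eq)
  then have "(\<Sum>i\<in>UNIV. t i powr p) \<le> real k powr (p - 1) * (\<Sum>i\<in>UNIV. t i)"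
    using assms(2) by (intro sum_powr_le_powr_mult_sum) (auto simp: t_def)
  also have "\<dots> \<le> real k powr (p - 1) * (real k * real u)"
    using c_path_l1_le[OF assms(1)] unfolding t_def of_int_sum[symmetric]
    by (intro mult_left_mono) (metis of_int_le_iff of_int_mult of_int_of_nat_eq, simp)
  also have "\<dots> = real k powr (p - 1) * real k powr 1 * real u"
    by simp
  also have "\<dots> = real k powr p * real u"
    by (subst powr_add[symmetric]) simp
  finally have "d_p p a b \<le> (real k powr p * real u) powr (1 / p)"
    unfolding d_p_def t_def[symmetric] using assms(2) by (intro powr_mono2) (auto intro: sum_nonneg)
  also have "\<dots> = real k * real u powr (1 / p)"
    using assms(2) by (simp add: powr_mult powr_powr)
  finally show ?thesis .
qed

lemma finite_uniform_nat_bound: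
  assumes "finite A" and "\<forall>a\<in>A. \<exists>k::nat. P a k"
  shows "\<exists>E. \<forall>a\<in>A. \<exists>k\<le>E. P a k"
proof -
  obtain f where f: "\<forall>a\<in>A. P a (f a)"
    using assms(2) by metis
  then have "\<forall>a\<in>A. f a \<le> Max (f ` A) \<and> P a (f a)"
    using assms(1) by simp
  then show ?thesis
    by blast
qed

lemma H_digital_le_nat_imp_short_paths:
  assumes "finite A" and "finite B"
    and "\<forall>a\<in>A. \<exists>k. \<exists>b\<in>B. c_path X u k a b" and "\<forall>b\<in>B. \<exists>k. \<exists>a\<in>A. c_path X u k b a"
    and "H_digital X u A B \<le> real m"
  shows "(\<forall>a\<in>A. \<exists>b\<in>B. \<exists>k\<le>m. c_path X u k a b) \<and> (\<forall>b\<in>B. \<exists>a\<in>A. \<exists>k\<le>m. c_path X u k b a)"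
proof -
  let ?S = "{\<epsilon>::real. \<epsilon> \<ge> 0 \<and>
      (\<forall>a\<in>A. \<exists>b\<in>B. \<exists>k. real k \<le> \<epsilon> \<and> c_path X u k a b) \<and>
      (\<forall>b\<in>B. \<exists>a\<in>A. \<exists>k. real k \<le> \<epsilon> \<and> c_path X u k b a)}"
  obtain E\<^sub>A E\<^sub>B where
    "\<forall>a\<in>A. \<exists>k\<le>E\<^sub>A. \<exists>b\<in>B. c_path X u k a b" and "\<forall>b\<in>B. \<exists>k\<le>E\<^sub>B. \<exists>a\<in>A. c_path X u k b a"
    using finite_uniform_nat_bound[OF assms(1), of "\<lambda>a k. \<exists>b\<in>B. c_path X u k a b"]
      finite_uniform_nat_bound[OF assms(2), of "\<lambda>b k. \<exists>a\<in>A. c_path X u k b a"] assms(3,4)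
    by blast
  then have "\<forall>a\<in>A. \<exists>b\<in>B. \<exists>k. real k \<le> real (max E\<^sub>A E\<^sub>B) \<and> c_path X u k a b"
    and "\<forall>b\<in>B. \<exists>a\<in>A. \<exists>k. real k \<le> real (max E\<^sub>A E\<^sub>B) \<and> c_path X u k b a"
    by (metis max.coboundedI1 of_nat_le_iff, metis max.coboundedI2 of_nat_le_iff)
  then have "real (max E\<^sub>A E\<^sub>B) \<in> ?S"
    by simp
  then have "?S \<noteq> {}"
    by blast
  moreover have "Inf ?S < real m + 1"
    using assms(5) unfolding H_digital_def by simp
  ultimately have "\<exists>s\<in>?S. s < real m + 1"
    by (rule cInf_lessD)
  then obtain s where "s \<in> ?S" and "s < real m + 1"
    by blast
  have "k \<le> m" if "real k \<le> s" for k
  proof -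
    have "real k < real (Suc m)"
      using that \<open>s < real m + 1\<close> by simp
    then show ?thesis
      by simp
  qed
  with \<open>s \<in> ?S\<close> show ?thesis
    by blast
qed

lemma H_p_le:
  assumes "\<epsilon> \<ge> 0" and "\<forall>a\<in>A. \<exists>b\<in>B. d_p p a b \<le> \<epsilon>" and "\<forall>b\<in>B. \<exists>a\<in>A. d_p p a b \<le> \<epsilon>"
  shows "H_p p A B \<le> \<epsilon>"
  unfolding H_p_def using assms by (intro cInf_lower bdd_belowI[of _ 0]) auto

theorem theorem3p4:
  fixes X A B :: "(int ^ 'n) set" and u m :: nat and p :: real
  assumes "1 \<le> u" and "u \<le> CARD('n)" and "p \<ge> 1"
    and "c_connected u X"
    and "A \<subseteq> X" and "B \<subseteq> X"
    and "finite A" and "finite B" and "A \<noteq> {}" and "B \<noteq> {}"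
    and "c_connected u A" and "c_connected u B"
    and "H_digital X u A B \<le> real m"
  shows "H_p p A B \<le> real m * real u powr (1 / p)"
proof -
  have "\<forall>a\<in>A. \<exists>k. \<exists>b\<in>B. c_path X u k a b" and "\<forall>b\<in>B. \<exists>k. \<exists>a\<in>A. c_path X u k b a"
    using assms(4-6,9,10) unfolding c_connected_def by blast+
  then have short_paths:
    "(\<forall>a\<in>A. \<exists>b\<in>B. \<exists>k\<le>m. c_path X u k a b) \<and> (\<forall>b\<in>B. \<exists>a\<in>A. \<exists>k\<le>m. c_path X u k b a)"
    using H_digital_le_nat_imp_short_paths assms(7,8,13) by blast
  have d_p_le: "d_p p x y \<le> real m * real u powr (1 / p)" if "c_path X u k x y" and "k \<le> m" for x y k
  proof -
    have "d_p p x y \<le> real k * real u powr (1 / p)"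
      using d_p_c_path_le[OF that(1) assms(3)] .
    also have "\<dots> \<le> real m * real u powr (1 / p)"
      using that(2) by (intro mult_right_mono) auto
    finally show ?thesis .
  qed
  show ?thesis
  proof (rule H_p_le)
    show "\<forall>a\<in>A. \<exists>b\<in>B. d_p p a b \<le> real m * real u powr (1 / p)"
      using short_paths d_p_le by blast
    show "\<forall>b\<in>B. \<exists>a\<in>A. d_p p a b \<le> real m * real u powr (1 / p)"
      using short_paths d_p_le d_p_commute by metis
  qed simp
qed

end
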